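(* Let $d\ge 1$, $\lambda>0$, $\delta>0$, and let $f:\mathbb{R}^d\to\mathbb{R}$ satisfy: (A1) $f$ is continuous and has at least one minimizer; (A2) $\int_{\mathbb{R}^d}\exp(-f(y)/\delta)\,dy<+\infty$. Then the zeroth-order proximal operator $\operatorname{zprox}^\delta_{\lambda,f}$ is $C^\infty$ and bijective, and \[ \operatorname{zprox}^\delta_{\lambda,f}=\operatorname{prox}_{\lambda\delta H_{\lambda,\delta}}, \] where $H_{\lambda,\delta}:\mathbb{R}^d\to\mathbb{R}$ is defined by \[ H_{\lambda,\delta}(x)=-\frac{1}{2\lambda\delta}\big\|(\operatorname{zprox}^\delta_{\lambda,f})^{-1}(x)-x\big\|^2+\frac{1}{\delta}f^{\lambda,\delta}\big((\operatorname{zprox}^\delta_{\lambda,f})^{-1}(x)\big). \] In particular, the sequence $(x^k)_{k\in\mathbb{N}}$ generated by ZOPPA is a proximal point iteration, i.e. $x^{k+1}=\operatorname{prox}_{\lambda\delta H_{\lambda,\delta}}(x^k)$ for all $k$.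
   Context: The zeroth-order proximal operator is $\operatorname{zprox}^\delta_{\lambda,f}(x)=\dfrac{\mathbb{E}_{y\sim\mathcal N(x,\lambda\delta I)}[y\exp(-f(y)/\delta)]}{\mathbb{E}_{y\sim\mathcal N(x,\lambda\delta I)}[\exp(-f(y)/\delta)]}$, and the soft Moreau envelope is $f^{\lambda,\delta}(x)=-\delta\log\mathbb{E}_{y\sim\mathcal N(x,\lambda\delta I)}[\exp(-f(y)/\delta)]$. For a function $g:\mathbb{R}^d\to\mathbb{R}$ and $t>0$, $\operatorname{prox}_{tg}(x)=\operatorname{argmin}_{y\in\mathbb{R}^d}\{t\,g(y)+\tfrac12\|y-x\|^2\}$. ZOPPA (Zeroth-Order Proximal Point Algorithm): given $x^0\in\mathbb{R}^d$, iterate $x^{k+1}=\operatorname{zprox}^\delta_{\lambda,f}(x^k)$ for $k\ge 0$. *)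

theory Defs
  imports "HOL-Analysis.Analysis"
begin

definition gauss_density :: "real \<Rightarrow> 'a::euclidean_space \<Rightarrow> 'a \<Rightarrow> real" where
  "gauss_density s x y =
     (2 * pi * s) powr (- real DIM('a) / 2) * exp (- (norm (y - x))\<^sup>2 / (2 * s))"

definition zprox :: "real \<Rightarrow> real \<Rightarrow> ('a::euclidean_space \<Rightarrow> real) \<Rightarrow> 'a \<Rightarrow> 'a" where
  "zprox lam \<delta> f x =
     (1 / (\<integral> y. gauss_density (lam * \<delta>) x y * exp (- f y / \<delta>) \<partial>lborel)) *\<^sub>R
     (\<integral> y. (gauss_density (lam * \<delta>) x y * exp (- f y / \<delta>)) *\<^sub>R y \<partial>lborel)"

definition soft_moreau :: "real \<Rightarrow> real \<Rightarrow> ('a::euclidean_space \<Rightarrow> real) \<Rightarrow> 'a \<Rightarrow> real" where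
  "soft_moreau lam \<delta> f x =
     - \<delta> * ln (\<integral> y. gauss_density (lam * \<delta>) x y * exp (- f y / \<delta>) \<partial>lborel)"

text \<open>The set of minimizers of t g(y) + 1/2 |y - x|^2; prox_{tg}(x) = p means this set is {p}.\<close>
definition prox_set :: "('a::real_normed_vector \<Rightarrow> real) \<Rightarrow> real \<Rightarrow> 'a \<Rightarrow> 'a set" where
  "prox_set g t x = {p. \<forall>y. t * g p + (norm (p - x))\<^sup>2 / 2 \<le> t * g y + (norm (y - x))\<^sup>2 / 2}"

inductive_set iter_derivs :: "('a::real_normed_vector \<Rightarrow> 'b::real_normed_vector) \<Rightarrow> ('a \<Rightarrow> 'b) set"
  for f where
  base: "f \<in> iter_derivs f"
| step: "g \<in> iter_derivs f \<Longrightarrow> (\<forall>x. g differentiable (at x)) \<Longrightarrow>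
         (\<lambda>x. frechet_derivative g (at x) v) \<in> iter_derivs f"

definition C_infinity :: "('a::real_normed_vector \<Rightarrow> 'b::real_normed_vector) \<Rightarrow> bool" where
  "C_infinity f \<longleftrightarrow> (\<forall>g \<in> iter_derivs f. \<forall>x. g differentiable (at x))"

definition H_fun :: "real \<Rightarrow> real \<Rightarrow> ('a::euclidean_space \<Rightarrow> real) \<Rightarrow> 'a \<Rightarrow> real" where
  "H_fun lam \<delta> f x =
     - (norm (inv (zprox lam \<delta> f) x - x))\<^sup>2 / (2 * lam * \<delta>)
     + soft_moreau lam \<delta> f (inv (zprox lam \<delta> f) x) / \<delta>"

end

(* Write Z x for the integral of the Gaussian density N(x, lam delta I) against exp (- f / delta).
   Differentiating under the integral sign shows that zprox is the gradient of
   psi x = |x|^2/2 + lam delta ln (Z x), and that the derivative of zprox is the covariance of the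
   (non-degenerate) tilted Gaussian divided by lam delta. Hence zprox is strictly monotone and psi is
   strictly convex; since psi x - <x, z> grows at least like |x|/2 for every z, zprox is also onto.
   By construction lam delta H + |.|^2/2 is the convex conjugate of psi, and the proximal objective of
   a conjugate is minimised exactly at the gradient of psi. Smoothness holds because all directional
   derivatives of moments, coordinates and 1/Z stay in the algebra they generate. *)

theory Submission
  imports Defs
begin

lemma continuous_AE_lborel_eq_0:
  fixes g :: "'a::euclidean_space \<Rightarrow> real"
  assumes "continuous_on UNIV g" "AE y in lborel. g y = 0"
  shows "g x = 0"
proof -
  have "closed {y. g y = 0}"
    using assms(1) by (intro closed_Collect_eq) (auto simp: continuous_on_eq_continuous_at)
  moreover have "AE y in lebesgue. y \<in> {y. g y = 0}"
    using AE_completion[OF assms(2)] by simp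
  ultimately show ?thesis
    using mem_closed_if_AE_lebesgue by blast
qed

lemma tendsto_integral_dominated_at:
  fixes k :: "'a::first_countable_topology \<Rightarrow> 'b \<Rightarrow> 'c::{banach, second_countable_topology}"
  assumes meas: "\<And>t. k t \<in> borel_measurable M" "g \<in> borel_measurable M"
    and w: "integrable M w"
    and lim: "\<And>y. y \<in> space M \<Longrightarrow> ((\<lambda>t. k t y) \<longlongrightarrow> g y) (at t0)"
    and bound: "\<forall>\<^sub>F t in at t0. \<forall>y\<in>space M. norm (k t y) \<le> w y"
  shows "((\<lambda>t. \<integral>y. k t y \<partial>M) \<longlongrightarrow> (\<integral>y. g y \<partial>M)) (at t0)"
proof (subst tendsto_at_iff_sequentially, intro allI impI)
  fix X assume X: "\<forall>i. X i \<in> UNIV - {t0}" "X \<longlonglongrightarrow> t0"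
  then have "filterlim X (at t0) sequentially"
    by (intro filterlim_atI) auto
  from filterlim_iff[THEN iffD1, OF this, rule_format, OF bound]
  obtain N where N: "\<And>n. N \<le> n \<Longrightarrow> \<forall>y\<in>space M. norm (k (X n) y) \<le> w y"
    by (auto simp: eventually_sequentially)
  have "(\<lambda>n. \<integral>y. k (X (n + N)) y \<partial>M) \<longlonglongrightarrow> (\<integral>y. g y \<partial>M)"
  proof (rule integral_dominated_convergence[where w = w])
    show "AE y in M. norm (k (X (n + N)) y) \<le> w y" for n
      using N[of "n + N"] by auto
    show "AE y in M. (\<lambda>n. k (X (n + N)) y) \<longlonglongrightarrow> g y"
      using lim X unfolding tendsto_at_iff_sequentially
      by (auto simp: comp_def intro!: LIMSEQ_ignore_initial_segment)
  qed (use meas w in auto)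
  then show "((\<lambda>t. \<integral>y. k t y \<partial>M) \<circ> X) \<longlonglongrightarrow> (\<integral>y. g y \<partial>M)"
    unfolding comp_def by (rule LIMSEQ_offset)
qed

lemma has_derivative_integral_param:
  fixes k :: "'a::euclidean_space \<Rightarrow> 'b \<Rightarrow> real" and Dk :: "'a \<Rightarrow> 'b \<Rightarrow> 'a"
  assumes "r > 0"
    and int: "\<And>z. integrable M (k z)"
    and Dmeas: "Dk x \<in> borel_measurable M"
    and der: "\<And>z y. z \<in> ball x r \<Longrightarrow> y \<in> space M \<Longrightarrow>
                ((\<lambda>z. k z y) has_derivative (\<lambda>h. Dk z y \<bullet> h)) (at z)"
    and w: "integrable M w"
    and bound: "\<And>z y. z \<in> ball x r \<Longrightarrow> y \<in> space M \<Longrightarrow> norm (Dk z y) \<le> w y"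
  shows "((\<lambda>z. \<integral>y. k z y \<partial>M) has_derivative (\<lambda>h. (\<integral>y. Dk x y \<partial>M) \<bullet> h)) (at x)"
proof -
  have intD: "integrable M (Dk x)"
    by (rule Bochner_Integration.integrable_bound[OF w Dmeas])
       (use bound \<open>r > 0\<close> in \<open>auto intro!: AE_I2 order_trans[OF _ abs_ge_self]\<close>)
  define q where "q h y = (k (x + h) y - k x y - Dk x y \<bullet> h) / norm h" for h y
  have integral_q: "(\<integral>y. q h y \<partial>M) =
      ((\<integral>y. k (x + h) y \<partial>M) - (\<integral>y. k x y \<partial>M) - (\<integral>y. Dk x y \<partial>M) \<bullet> h) / norm h" for h
    unfolding q_def using int intD by simp
  have mean_value: "\<bar>k (x + h) y - k x y\<bar> \<le> w y * norm h"
    if "norm h < r" "y \<in> space M" for h y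
  proof -
    have "norm (k (x + h) y - k x y) \<le> w y * norm (x + h - x)"
    proof (rule differentiable_bound[of "ball x r"])
      show "((\<lambda>z. k z y) has_derivative (\<lambda>h. Dk z y \<bullet> h)) (at z within ball x r)"
        if "z \<in> ball x r" for z
        using der[OF that \<open>y \<in> space M\<close>] by (rule has_derivative_at_withinI)
      show "onorm (\<lambda>h. Dk z y \<bullet> h) \<le> w y" if "z \<in> ball x r" for z
        using onorm_inner_right[OF bounded_linear_ident, of "Dk z y"] bound[OF that \<open>y \<in> space M\<close>]
        by (simp add: onorm_id)
    qed (use that \<open>r > 0\<close> in \<open>auto simp: dist_norm\<close>)
    then show ?thesis by simp
  qed
  have "((\<lambda>h. \<integral>y. q h y \<partial>M) \<longlongrightarrow> (\<integral>y. 0 \<partial>M)) (at 0)"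
  proof (rule tendsto_integral_dominated_at[where w = "\<lambda>y. 2 * w y"])
    show "q h \<in> borel_measurable M" for h
      unfolding q_def using int intD by measurable
    show "((\<lambda>h. q h y) \<longlongrightarrow> 0) (at 0)" if "y \<in> space M" for y
    proof -
      have "((\<lambda>h. norm (k (x + h) y - k x y - Dk x y \<bullet> h) / norm h) \<longlongrightarrow> 0) (at 0)"
        using der[OF _ that] \<open>r > 0\<close> unfolding has_derivative_at by simp
      then have "((\<lambda>h. norm (q h y)) \<longlongrightarrow> 0) (at 0)"
        by (simp add: q_def abs_divide)
      then show ?thesis
        by (rule tendsto_norm_zero_cancel)
    qed
    show "\<forall>\<^sub>F h in at 0. \<forall>y\<in>space M. norm (q h y) \<le> 2 * w y"
    proof -
      have "\<forall>\<^sub>F h in at 0. norm h < r"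
        using \<open>r > 0\<close> by (auto simp: eventually_at dist_norm)
      moreover have "norm (q h y) \<le> 2 * w y" if "norm h < r" "y \<in> space M" for h y
      proof (cases "h = 0")
        case False
        have "\<bar>Dk x y \<bullet> h\<bar> \<le> w y * norm h"
          using order_trans[OF Cauchy_Schwarz_ineq2 mult_right_mono[OF bound[of x y]]] that \<open>r > 0\<close>
          by simp
        with mean_value[OF that] False show ?thesis
          by (simp add: q_def abs_divide divide_le_eq)
      qed (use bound[of x y] that \<open>r > 0\<close> in \<open>auto simp: q_def intro: order_trans[OF norm_ge_zero]\<close>)
      ultimately show ?thesis by (auto elim: eventually_mono)
    qed
  qed (use w in auto)
  then have "((\<lambda>h. \<bar>\<integral>y. q h y \<partial>M\<bar>) \<longlongrightarrow> 0) (at 0)"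
    by (simp add: tendsto_rabs_zero_iff)
  then show ?thesis
    unfolding has_derivative_at integral_q by (simp add: abs_divide bounded_linear_inner_right)
qed

lemma gauss_density_pos: "s > 0 \<Longrightarrow> gauss_density s x y > 0"
  unfolding gauss_density_def by simp

lemma gauss_density_eq:
  fixes x y :: "'a::euclidean_space"
  shows "gauss_density s x y = gauss_density s (0::'a) 0 * exp (- (norm (y - x))\<^sup>2 / (2 * s))"
  unfolding gauss_density_def by simp

lemma gauss_density_has_derivative:
  fixes y z :: "'a::euclidean_space"
  assumes "s > 0"
  shows "((\<lambda>z. gauss_density s z y) has_derivative
           (\<lambda>h. ((gauss_density s z y / s) *\<^sub>R (y - z)) \<bullet> h)) (at z)"
proof -
  have "((\<lambda>z. - ((y - z) \<bullet> (y - z)) / (2 * s)) has_derivative (\<lambda>h. ((y - z) \<bullet> h) / s)) (at z)"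
    using assms by (auto intro!: derivative_eq_intros simp: inner_commute field_simps)
  from has_derivative_mult_right[OF has_derivative_exp[OF this], of "(2 * pi * s) powr (- real DIM('a) / 2)"]
  show ?thesis
    by (simp add: gauss_density_def power2_norm_eq_inner mult_ac)
qed

lemma gauss_exp_growth_bound:
  fixes y z :: "'a::real_normed_vector"
  assumes "s > 0" "a \<ge> 0" "norm z \<le> R"
  shows "exp (- (norm (y - z))\<^sup>2 / (2 * s)) * exp (a * norm y) \<le> exp (a * R + a\<^sup>2 * s / 2)"
proof -
  define t where "t = norm (y - z)"
  have "a * norm y \<le> a * R + a * t"
    using norm_triangle_ineq[of z "y - z"] assms
    by (simp add: t_def flip: distrib_left) (intro mult_left_mono; simp)
  moreover have "- t\<^sup>2 / (2 * s) + a * t \<le> a\<^sup>2 * s / 2"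
  proof -
    have "a\<^sup>2 * s / 2 - (- t\<^sup>2 / (2 * s) + a * t) = (t - a * s)\<^sup>2 / (2 * s)"
      using assms by (simp add: field_simps power2_eq_square)
    then show ?thesis using assms by (smt (verit) divide_nonneg_pos zero_le_power2)
  qed
  ultimately show ?thesis
    by (simp add: t_def flip: exp_add)
qed

definition cont_exp_growth :: "('a::real_normed_vector \<Rightarrow> 'b::real_normed_vector) \<Rightarrow> bool" where
  "cont_exp_growth p \<longleftrightarrow>
     continuous_on UNIV p \<and> (\<exists>C a. a \<ge> 0 \<and> (\<forall>y. norm (p y) \<le> C * exp (a * norm y)))"

lemma cont_exp_growthE:
  assumes "cont_exp_growth p"
  obtains C a where "C \<ge> 0" "a \<ge> 0" "\<And>y. norm (p y) \<le> C * exp (a * norm y)" "continuous_on UNIV p"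
proof -
  obtain C a where "a \<ge> 0" "\<And>y. norm (p y) \<le> C * exp (a * norm y)" "continuous_on UNIV p"
    using assms unfolding cont_exp_growth_def by blast
  moreover have "C \<ge> 0"
    using order_trans[OF norm_ge_zero \<open>norm (p 0) \<le> C * exp (a * norm 0)\<close>] by simp
  ultimately show ?thesis using that by blast
qed

lemma cont_exp_growth_const: "cont_exp_growth (\<lambda>y. c)"
proof -
  have "norm c \<le> norm c * exp (0 * norm y)" for y :: 'a
    by simp
  then show ?thesis
    unfolding cont_exp_growth_def by (blast intro: continuous_on_const)
qed

lemma cont_exp_growth_ident: "cont_exp_growth (\<lambda>y. y)"
proof -
  have "norm y \<le> 1 * exp (1 * norm y)" for y :: 'a
    using exp_ge_add_one_self[of "norm y"] unfolding mult_1 by linarith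
  then show ?thesis unfolding cont_exp_growth_def by (auto intro!: exI[of _ 1])
qed

lemma cont_exp_growth_scaleR:
  fixes p :: "'a::real_normed_vector \<Rightarrow> real"
  assumes "cont_exp_growth p" "cont_exp_growth q"
  shows "cont_exp_growth (\<lambda>y. p y *\<^sub>R q y)"
proof -
  obtain C a where C: "C \<ge> 0" "a \<ge> 0" "\<And>y. norm (p y) \<le> C * exp (a * norm y)" "continuous_on UNIV p"
    using cont_exp_growthE[OF assms(1)] by blast
  obtain D b where D: "D \<ge> 0" "b \<ge> 0" "\<And>y. norm (q y) \<le> D * exp (b * norm y)" "continuous_on UNIV q"
    using cont_exp_growthE[OF assms(2)] by blast
  have "norm (p y *\<^sub>R q y) \<le> (C * D) * exp ((a + b) * norm y)" for y
    using mult_mono[OF C(3) D(3)] C D by (simp add: algebra_simps exp_add)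
  moreover have "continuous_on UNIV (\<lambda>y. p y *\<^sub>R q y)"
    using C D by (intro continuous_intros)
  moreover have "a + b \<ge> 0"
    using C D by simp
  ultimately show ?thesis
    unfolding cont_exp_growth_def by blast
qed

lemma cont_exp_growth_mult:
  fixes p q :: "'a::real_normed_vector \<Rightarrow> real"
  shows "cont_exp_growth p \<Longrightarrow> cont_exp_growth q \<Longrightarrow> cont_exp_growth (\<lambda>y. p y * q y)"
  using cont_exp_growth_scaleR[of p q] by simp

lemma cont_exp_growth_diff:
  assumes "cont_exp_growth p" "cont_exp_growth q"
  shows "cont_exp_growth (\<lambda>y. p y - q y)"
proof -
  obtain C a where C: "C \<ge> 0" "a \<ge> 0" "\<And>y. norm (p y) \<le> C * exp (a * norm y)" "continuous_on UNIV p"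
    using cont_exp_growthE[OF assms(1)] by blast
  obtain D b where D: "D \<ge> 0" "b \<ge> 0" "\<And>y. norm (q y) \<le> D * exp (b * norm y)" "continuous_on UNIV q"
    using cont_exp_growthE[OF assms(2)] by blast
  have "norm (p y - q y) \<le> (C + D) * exp ((a + b) * norm y)" for y
  proof -
    have "C * exp (a * norm y) \<le> C * exp ((a + b) * norm y)"
      "D * exp (b * norm y) \<le> D * exp ((a + b) * norm y)"
      using C D by (auto intro!: mult_left_mono simp: algebra_simps)
    then show ?thesis
      using norm_triangle_ineq4[of "p y" "q y"] C(3)[of y] D(3)[of y] by (simp add: algebra_simps)
  qed
  moreover have "continuous_on UNIV (\<lambda>y. p y - q y)"
    using C D by (intro continuous_intros)
  moreover have "a + b \<ge> 0"
    using C D by simp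
  ultimately show ?thesis
    unfolding cont_exp_growth_def by blast
qed

lemma cont_exp_growth_inner:
  assumes "cont_exp_growth q"
  shows "cont_exp_growth (\<lambda>y. q y \<bullet> v)"
proof -
  obtain C a where C: "C \<ge> 0" "a \<ge> 0" "\<And>y. norm (q y) \<le> C * exp (a * norm y)" "continuous_on UNIV q"
    using cont_exp_growthE[OF assms] by blast
  have "norm (q y \<bullet> v) \<le> (C * norm v) * exp (a * norm y)" for y
    using order_trans[OF Cauchy_Schwarz_ineq2 mult_right_mono[OF C(3)]] by (simp add: mult_ac)
  then show ?thesis
    unfolding cont_exp_growth_def using C by (auto intro!: continuous_intros)
qed

lemma has_derivative_coordinatewise:
  fixes g :: "'a::real_normed_vector \<Rightarrow> 'b::euclidean_space" and A :: "('a \<Rightarrow> real) set"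
  assumes A: "\<And>h. h \<in> A \<Longrightarrow> \<exists>D. (\<forall>x. (h has_derivative D x) (at x)) \<and> (\<forall>v. (\<lambda>x. D x v) \<in> A)"
    and g: "\<And>i. i \<in> Basis \<Longrightarrow> (\<lambda>x. g x \<bullet> i) \<in> A"
  shows "\<exists>Dg. (\<forall>x. (g has_derivative Dg x) (at x)) \<and> (\<forall>v. \<forall>i\<in>Basis. (\<lambda>x. Dg x v \<bullet> i) \<in> A)"
proof -
  obtain D where D: "\<And>i x. i \<in> Basis \<Longrightarrow> ((\<lambda>x. g x \<bullet> i) has_derivative D i x) (at x)"
    and DA: "\<And>i v. i \<in> Basis \<Longrightarrow> (\<lambda>x. D i x v) \<in> A"
    using A[OF g] by metis
  define Dg where "Dg x v = (\<Sum>i\<in>Basis. D i x v *\<^sub>R i)" for x v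
  have "((\<lambda>x. \<Sum>i\<in>Basis. (g x \<bullet> i) *\<^sub>R i) has_derivative Dg x) (at x)" for x
    unfolding Dg_def using D by (intro has_derivative_sum has_derivative_scaleR_left) auto
  then have "(g has_derivative Dg x) (at x)" for x
    by (simp add: euclidean_representation)
  moreover have "(\<lambda>x. Dg x v \<bullet> i) \<in> A" if "i \<in> Basis" for v i
  proof -
    have "Dg x v \<bullet> i = D i x v" for x
      unfolding Dg_def using that
      by (simp add: inner_sum_left inner_Basis if_distrib sum.delta cong: if_cong)
    then show ?thesis
      using DA[OF that] by simp
  qed
  ultimately show ?thesis
    by blast
qed

lemma C_infinity_if_coordinates_in_derivative_closed:
  fixes g :: "'a::real_normed_vector \<Rightarrow> 'b::euclidean_space" and A :: "('a \<Rightarrow> real) set"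
  assumes A: "\<And>h. h \<in> A \<Longrightarrow> \<exists>D. (\<forall>x. (h has_derivative D x) (at x)) \<and> (\<forall>v. (\<lambda>x. D x v) \<in> A)"
    and g: "\<And>i. i \<in> Basis \<Longrightarrow> (\<lambda>x. g x \<bullet> i) \<in> A"
  shows "C_infinity g"
proof -
  define V where "V = {g :: 'a \<Rightarrow> 'b. \<forall>i\<in>Basis. (\<lambda>x. g x \<bullet> i) \<in> A}"
  have V_step: "(\<forall>x. h differentiable (at x)) \<and> (\<forall>v. (\<lambda>x. frechet_derivative h (at x) v) \<in> V)"
    if "h \<in> V" for h
  proof -
    obtain Dh where Dh: "\<And>x. (h has_derivative Dh x) (at x)" "\<And>v i. i \<in> Basis \<Longrightarrow> (\<lambda>x. Dh x v \<bullet> i) \<in> A"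
      using has_derivative_coordinatewise[OF A] \<open>h \<in> V\<close> unfolding V_def by blast
    then have "frechet_derivative h (at x) = Dh x" for x
      by (metis frechet_derivative_at)
    with Dh show ?thesis
      unfolding differentiable_def V_def by auto
  qed
  have "h \<in> V" if "h \<in> iter_derivs g" for h
    using that
  proof induction
    case base
    then show ?case using g by (simp add: V_def)
  next
    case (step h v)
    then show ?case using V_step by blast
  qed
  then show ?thesis
    unfolding C_infinity_def using V_step by blast
qed

lemma has_real_derivative_along_line:
  fixes g :: "'a::real_normed_vector \<Rightarrow> real"
  assumes "(g has_derivative G) (at (b + t *\<^sub>R u))"
  shows "((\<lambda>t. g (b + t *\<^sub>R u)) has_real_derivative G u) (at t)"
proof -
  have "((\<lambda>t. b + t *\<^sub>R u) has_derivative (\<lambda>h. h *\<^sub>R u)) (at t)"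
    by (auto intro!: derivative_eq_intros)
  from has_derivative_compose[OF this assms]
  have "((\<lambda>t. g (b + t *\<^sub>R u)) has_derivative (\<lambda>h. G (h *\<^sub>R u))) (at t)" .
  moreover have "G (h *\<^sub>R u) = G u * h" for h
    using linear_cmul[OF has_derivative_linear[OF assms]] by simp
  ultimately show ?thesis
    by (simp add: has_field_derivative_def)
qed

lemma strictly_monotone_if_directional_derivative_pos:
  fixes G :: "'a::real_inner \<Rightarrow> 'a"
  assumes deriv: "\<And>x u. ((\<lambda>x. G x \<bullet> u) has_derivative D x u) (at x)"
    and pos: "\<And>x u. u \<noteq> 0 \<Longrightarrow> D x u u > 0"
    and "a \<noteq> b"
  shows "(G a - G b) \<bullet> (a - b) > 0"
proof -
  define u where "u = a - b"
  have "u \<noteq> 0" using \<open>a \<noteq> b\<close> by (simp add: u_def)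
  have "G (b + 0 *\<^sub>R u) \<bullet> u < G (b + 1 *\<^sub>R u) \<bullet> u"
  proof (rule DERIV_pos_imp_increasing[of 0 1])
    fix t
    have "((\<lambda>t. G (b + t *\<^sub>R u) \<bullet> u) has_real_derivative D (b + t *\<^sub>R u) u u) (at t)"
      by (rule has_real_derivative_along_line[OF deriv])
    then show "\<exists>y. ((\<lambda>t. G (b + t *\<^sub>R u) \<bullet> u) has_real_derivative y) (at t) \<and> 0 < y"
      using pos[OF \<open>u \<noteq> 0\<close>] by blast
  qed simp
  then show ?thesis
    by (simp add: u_def inner_diff_left)
qed

lemma gradient_inequality_if_strictly_monotone:
  fixes \<psi> :: "'a::real_inner \<Rightarrow> real"
  assumes grad: "\<And>x. (\<psi> has_derivative (\<lambda>h. G x \<bullet> h)) (at x)"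
    and mono: "\<And>a b. a \<noteq> b \<Longrightarrow> (G a - G b) \<bullet> (a - b) > 0"
    and "w \<noteq> x"
  shows "\<psi> w + G w \<bullet> (x - w) < \<psi> x"
proof -
  define u where "u = x - w"
  define \<phi> where "\<phi> t = \<psi> (w + t *\<^sub>R u) - t * (G w \<bullet> u)" for t
  have "((\<lambda>t. \<psi> (w + t *\<^sub>R u)) has_real_derivative G (w + t *\<^sub>R u) \<bullet> u) (at t)" for t
    using has_real_derivative_along_line[OF grad] by simp
  then have deriv: "(\<phi> has_real_derivative (G (w + t *\<^sub>R u) - G w) \<bullet> u) (at t)" for t
    unfolding \<phi>_def inner_diff_left by (auto intro!: derivative_eq_intros)
  have "\<phi> 0 < \<phi> 1"
  proof (rule DERIV_pos_imp_increasing_open[of 0 1])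
    show "continuous_on {0..1} \<phi>"
      by (intro continuous_at_imp_continuous_on ballI DERIV_isCont[OF deriv])
    show "\<exists>y. (\<phi> has_real_derivative y) (at t) \<and> 0 < y" if "0 < t" "t < 1" for t
    proof -
      have "0 < (G (w + t *\<^sub>R u) - G w) \<bullet> (t *\<^sub>R u)"
        using mono[of "w + t *\<^sub>R u" w] that \<open>w \<noteq> x\<close> by (simp add: u_def)
      then have "0 < (G (w + t *\<^sub>R u) - G w) \<bullet> u"
        using that by (simp add: zero_less_mult_iff)
      with deriv show ?thesis by blast
    qed
  qed simp
  then show ?thesis
    by (simp add: \<phi>_def u_def)
qed

lemma gradient_surj_if_coercive:
  fixes \<psi> :: "'a::euclidean_space \<Rightarrow> real"
  assumes grad: "\<And>x. (\<psi> has_derivative (\<lambda>h. G x \<bullet> h)) (at x)"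
    and coercive: "\<And>z. \<exists>d>0. \<exists>c. \<forall>x. c + d * norm x \<le> \<psi> x - x \<bullet> z"
  shows "surj G"
proof -
  have "z \<in> range G" for z
  proof -
    define \<Phi> where "\<Phi> x = \<psi> x - x \<bullet> z" for x
    have deriv: "(\<Phi> has_derivative (\<lambda>h. G x \<bullet> h - h \<bullet> z)) (at x)" for x
      unfolding \<Phi>_def by (intro derivative_intros grad)
    have "continuous_on UNIV \<Phi>"
      by (intro continuous_at_imp_continuous_on ballI has_derivative_continuous[OF deriv])
    obtain c d where "d > 0" and bound: "\<And>x. c + d * norm x \<le> \<Phi> x"
      using coercive[of z] unfolding \<Phi>_def by blast
    define R where "R = \<bar>\<Phi> 0 - c\<bar> / d"
    have "R \<ge> 0"
      using \<open>d > 0\<close> by (simp add: R_def)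
    then have "\<exists>xm\<in>cball 0 R. \<forall>y\<in>cball 0 R. \<Phi> xm \<le> \<Phi> y"
      using \<open>continuous_on UNIV \<Phi>\<close>
      by (intro continuous_attains_inf compact_cball) (auto intro: continuous_on_subset)
    then obtain xm where min: "\<And>y. y \<in> cball 0 R \<Longrightarrow> \<Phi> xm \<le> \<Phi> y"
      by blast
    have "\<Phi> xm \<le> \<Phi> y" for y
    proof (cases "norm y \<le> R")
      case False
      then have "\<Phi> 0 < c + d * norm y"
        using \<open>d > 0\<close> by (simp add: R_def field_simps)
      with bound[of y] min[of 0] \<open>d > 0\<close> show ?thesis by (simp add: R_def)
    qed (use min in simp)
    then have "(\<lambda>h. G xm \<bullet> h - h \<bullet> z) = (\<lambda>h. 0)"
      by (intro differential_zero_maxmin[OF _ open_UNIV deriv]) auto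
    then have "G xm \<bullet> (G xm - z) - (G xm - z) \<bullet> z = 0"
      by (rule fun_cong)
    then have "(G xm - z) \<bullet> (G xm - z) = 0"
      by (simp add: inner_diff_left inner_commute)
    then show ?thesis by auto
  qed
  then show ?thesis by blast
qed

text \<open>If \<open>t g + \<bar>_\<bar>\<^sup>2/2\<close> is the convex conjugate of \<open>\<psi>\<close>, the objective of \<open>prox\<^sub>t\<^sub>g(x)\<close>
  evaluated at \<open>G w\<close> is \<open>\<psi> x - \<psi> w - G w \<bullet> (x - w)\<close> up to a constant,
  a Bregman divergence which vanishes only at \<open>w = x\<close>.\<close>
lemma prox_set_eq_gradient:
  fixes \<psi> g :: "'a::real_inner \<Rightarrow> real"
  assumes "bij G"
    and convex: "\<And>w x. w \<noteq> x \<Longrightarrow> \<psi> w + G w \<bullet> (x - w) < \<psi> x"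
    and conjugate: "\<And>y. t * g y = inv G y \<bullet> y - \<psi> (inv G y) - (norm y)\<^sup>2 / 2"
  shows "prox_set g t x = {G x}"
proof -
  define obj where "obj y = t * g y + (norm (y - x))\<^sup>2 / 2" for y
  have obj_G: "obj (G w) = (w - x) \<bullet> G w - \<psi> w + (norm x)\<^sup>2 / 2" for w
    using conjugate[of "G w"] bij_is_inj[OF \<open>bij G\<close>]
    by (simp add: obj_def power2_norm_eq_inner inner_diff_left inner_diff_right inner_commute field_simps)
  have "obj (G x) < obj (G w)" if "w \<noteq> x" for w
    using convex[OF that] by (simp add: obj_G inner_diff_left inner_diff_right inner_commute)
  then have "obj (G x) < obj y" if "y \<noteq> G x" for y
    using that bij_is_surj[OF \<open>bij G\<close>] by (metis surj_f_inv_f)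
  then have "(\<forall>y. obj p \<le> obj y) \<longleftrightarrow> p = G x" for p
    by (metis not_le order_refl order_less_imp_le)
  then show ?thesis
    unfolding prox_set_def obj_def[symmetric] by auto
qed

locale zprox_setting =
  fixes f :: "'a::euclidean_space \<Rightarrow> real" and lam \<delta> :: real
  assumes lam_pos: "lam > 0" and delta_pos: "\<delta> > 0"
    and f_continuous: "continuous_on UNIV f"
    and integrable_gibbs: "integrable lborel (\<lambda>y. exp (- f y / \<delta>))"
begin

abbreviation s :: real where "s \<equiv> lam * \<delta>"

lemma s_pos: "s > 0"
  using lam_pos delta_pos by simp

definition gibbs :: "'a \<Rightarrow> real" where
  "gibbs y = exp (- f y / \<delta>)"

definition weight :: "'a \<Rightarrow> 'a \<Rightarrow> real" where
  "weight x y = gauss_density s x y * gibbs y"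

lemma weight_pos: "weight x y > 0"
  unfolding weight_def gibbs_def by (intro mult_pos_pos gauss_density_pos s_pos exp_gt_zero)

lemma continuous_on_gibbs: "continuous_on UNIV gibbs"
  unfolding gibbs_def[abs_def] using delta_pos by (intro continuous_intros f_continuous) auto

lemma continuous_on_weight: "continuous_on UNIV (weight x)"
  unfolding weight_def[abs_def] gauss_density_def
  using s_pos by (intro continuous_intros continuous_on_gibbs) auto

lemma weight_exp_growth_bound:
  assumes "a \<ge> 0" "norm z \<le> R"
  shows "weight z y * exp (a * norm y)
    \<le> gauss_density s (0::'a) 0 * exp (a * R + a\<^sup>2 * s / 2) * gibbs y"
proof -
  have "weight z y * exp (a * norm y) =
      gauss_density s (0::'a) 0 * gibbs y * (exp (- (norm (y - z))\<^sup>2 / (2 * s)) * exp (a * norm y))"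
    unfolding weight_def by (subst gauss_density_eq) simp
  also have "\<dots> \<le> gauss_density s (0::'a) 0 * gibbs y * exp (a * R + a\<^sup>2 * s / 2)"
    using mult_pos_pos[OF gauss_density_pos[OF s_pos] exp_gt_zero, of "0::'a" 0 "- f y / \<delta>"] assms
    by (intro mult_left_mono gauss_exp_growth_bound s_pos) (auto simp: gibbs_def)
  finally show ?thesis
    by (simp only: mult_ac)
qed

lemma integrable_weight_scaleR:
  fixes q :: "'a \<Rightarrow> 'b::{banach, second_countable_topology}"
  assumes "cont_exp_growth q"
  shows "integrable lborel (\<lambda>y. weight x y *\<^sub>R q y)"
proof -
  obtain C a where C: "C \<ge> 0" "a \<ge> 0" "\<And>y. norm (q y) \<le> C * exp (a * norm y)" "continuous_on UNIV q"
    using cont_exp_growthE[OF assms] by blast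
  define K where "K = C * gauss_density s (0::'a) 0 * exp (a * norm x + a\<^sup>2 * s / 2)"
  show ?thesis
  proof (rule Bochner_Integration.integrable_bound)
    show "integrable lborel (\<lambda>y. K * gibbs y)"
      using integrable_gibbs by (simp add: gibbs_def)
    show "(\<lambda>y. weight x y *\<^sub>R q y) \<in> borel_measurable lborel"
      unfolding measurable_lborel2 using C(4)
      by (intro borel_measurable_continuous_onI continuous_intros continuous_on_weight)
    have bound: "norm (weight x y *\<^sub>R q y) \<le> K * gibbs y" for y
    proof -
      have "norm (weight x y *\<^sub>R q y) \<le> C * (weight x y * exp (a * norm y))"
        using mult_left_mono[OF C(3) less_imp_le[OF weight_pos]] weight_pos[of x y]
        by (simp add: mult_ac)
      also have "\<dots> \<le> K * gibbs y"
        using mult_left_mono[OF weight_exp_growth_bound[OF C(2), of x "norm x" y] C(1)]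
        by (simp add: K_def mult_ac)
      finally show ?thesis .
    qed
    then show "AE y in lborel. norm (weight x y *\<^sub>R q y) \<le> norm (K * gibbs y)"
      by (intro AE_I2 order_trans[OF bound]) simp
  qed
qed

lemma integrable_weight_mult:
  "cont_exp_growth p \<Longrightarrow> integrable lborel (\<lambda>y. weight x y * p y)"
  using integrable_weight_scaleR[of p x] by simp

definition moment :: "('a \<Rightarrow> real) \<Rightarrow> 'a \<Rightarrow> real" where
  "moment p x = (\<integral>y. weight x y * p y \<partial>lborel)"

abbreviation Z :: "'a \<Rightarrow> real" where
  "Z \<equiv> moment (\<lambda>_. 1)"

lemma moment_pos:
  assumes p: "cont_exp_growth p" and "\<And>y. p y \<ge> 0" and "p z > 0"
  shows "moment p x > 0"
proof -
  have nonneg: "weight x y * p y \<ge> 0" for y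
    using weight_pos[of x y] \<open>p y \<ge> 0\<close> by simp
  have "\<not> (AE y in lborel. weight x y * p y = 0)"
  proof
    assume "AE y in lborel. weight x y * p y = 0"
    moreover have "continuous_on UNIV (\<lambda>y. weight x y * p y)"
      using p by (auto simp: cont_exp_growth_def intro!: continuous_intros continuous_on_weight)
    ultimately have "weight x z * p z = 0"
      by (rule continuous_AE_lborel_eq_0[rotated])
    with weight_pos[of x z] \<open>p z > 0\<close> show False by simp
  qed
  then show ?thesis
    unfolding moment_def using integral_nonneg_eq_0_iff_AE[OF integrable_weight_mult[OF p]] nonneg
    by (simp add: order_less_le integral_nonneg_AE)
qed

lemma Z_pos: "Z x > 0"
  by (rule moment_pos[where z = 0]) (auto intro: cont_exp_growth_const)

lemma moment_linear_combination:
  assumes "cont_exp_growth p" "cont_exp_growth q" "cont_exp_growth r"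
  shows "moment (\<lambda>y. p y - a * q y + b * r y) x = moment p x - a * moment q x + b * moment r x"
  using integrable_weight_mult[OF assms(1), of x] integrable_weight_mult[OF assms(2), of x]
    integrable_weight_mult[OF assms(3), of x]
  by (simp add: moment_def algebra_simps)

lemma moment_integrand_derivative_bound:
  assumes "a \<ge> 0" "C \<ge> 0" "\<And>y. \<bar>p y\<bar> \<le> C * exp (a * norm y)" "norm z \<le> R"
  shows "norm ((weight z y * p y) *\<^sub>R (y - z))
    \<le> C * (1 + R) * gauss_density s (0::'a) 0 * exp ((a + 1) * R + (a + 1)\<^sup>2 * s / 2) * gibbs y"
proof -
  have "R \<ge> 0"
    using assms(4) norm_ge_zero order_trans by blast
  have "norm (y - z) \<le> norm y + R"
    using norm_triangle_ineq4[of y z] assms(4) by linarith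
  also have "\<dots> \<le> (1 + R) * exp (norm y)"
    using exp_ge_add_one_self[of "norm y"] mult_left_mono[OF one_le_exp_iff[THEN iffD2, OF norm_ge_zero[of y]] \<open>R \<ge> 0\<close>]
    unfolding distrib_right by linarith
  finally have diff_bound: "norm (y - z) \<le> (1 + R) * exp (norm y)" .
  have "norm ((weight z y * p y) *\<^sub>R (y - z)) = weight z y * \<bar>p y\<bar> * norm (y - z)"
    using weight_pos[of z y] by (simp add: abs_mult)
  also have "\<dots> \<le> weight z y * (C * exp (a * norm y)) * ((1 + R) * exp (norm y))"
    using weight_pos[of z y] assms \<open>R \<ge> 0\<close>
    by (intro mult_mono mult_left_mono diff_bound) auto
  also have "\<dots> = C * (1 + R) * (weight z y * exp ((a + 1) * norm y))"
    by (simp add: algebra_simps exp_add)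
  also have "\<dots> \<le> C * (1 + R) * (gauss_density s (0::'a) 0 * exp ((a + 1) * R + (a + 1)\<^sup>2 * s / 2) * gibbs y)"
    using assms \<open>R \<ge> 0\<close> by (intro mult_left_mono weight_exp_growth_bound) auto
  finally show ?thesis
    by (simp only: mult_ac)
qed

lemma moment_has_derivative:
  assumes p: "cont_exp_growth p"
  shows "(moment p has_derivative
           (\<lambda>h. (moment (\<lambda>y. p y * (y \<bullet> h)) x - (x \<bullet> h) * moment p x) / s)) (at x)"
proof -
  obtain C a where C: "C \<ge> 0" "a \<ge> 0" "\<And>y. norm (p y) \<le> C * exp (a * norm y)"
    using cont_exp_growthE[OF p] by metis
  define Dk where "Dk z y = (weight z y * p y / s) *\<^sub>R (y - z)" for z y
  define K where "K = C * (1 + (norm x + 1)) * gauss_density s (0::'a) 0 *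
    exp ((a + 1) * (norm x + 1) + (a + 1)\<^sup>2 * s / 2) / s"
  have "cont_exp_growth (\<lambda>y. (p y * (1 / s)) *\<^sub>R (y - x))"
    by (intro cont_exp_growth_scaleR cont_exp_growth_mult cont_exp_growth_diff
        cont_exp_growth_ident cont_exp_growth_const p)
  from integrable_weight_scaleR[OF this, of x]
  have integrable_Dk: "integrable lborel (Dk x)"
    by (simp add: Dk_def[abs_def])
  have "((\<lambda>z. \<integral>y. weight z y * p y \<partial>lborel) has_derivative (\<lambda>h. (\<integral>y. Dk x y \<partial>lborel) \<bullet> h)) (at x)"
  proof (rule has_derivative_integral_param[where r = 1 and w = "\<lambda>y. K * gibbs y"])
    show "integrable lborel (\<lambda>y. weight z y * p y)" for z
      by (rule integrable_weight_mult[OF p])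
    show "Dk x \<in> borel_measurable lborel"
      using integrable_Dk by (rule borel_measurable_integrable)
    show "integrable lborel (\<lambda>y. K * gibbs y)"
      using integrable_gibbs by (simp add: gibbs_def)
    show "((\<lambda>z. weight z y * p y) has_derivative (\<lambda>h. Dk z y \<bullet> h)) (at z)" for z y
      using has_derivative_mult_left[OF gauss_density_has_derivative[OF s_pos, of y z], of "gibbs y * p y"]
      by (simp add: Dk_def weight_def mult_ac)
    show "norm (Dk z y) \<le> K * gibbs y" if "z \<in> ball x 1" for z y
    proof -
      have "norm z \<le> norm x + 1"
        using that norm_triangle_ineq2[of z x] by (simp add: dist_norm norm_minus_commute)
      from moment_integrand_derivative_bound[OF C(2,1) _ this, of p y] C(3)
      show ?thesis
        using s_pos by (simp add: Dk_def K_def divide_right_mono)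
    qed
  qed simp
  moreover have "(\<integral>y. Dk x y \<partial>lborel) \<bullet> h = (moment (\<lambda>y. p y * (y \<bullet> h)) x - (x \<bullet> h) * moment p x) / s" for h
  proof -
    have "(\<integral>y. Dk x y \<partial>lborel) \<bullet> h = (\<integral>y. Dk x y \<bullet> h \<partial>lborel)"
      using integrable_Dk by simp
    also have "\<dots> = (\<integral>y. (weight x y * (p y * (y \<bullet> h)) - (x \<bullet> h) * (weight x y * p y)) / s \<partial>lborel)"
      by (intro Bochner_Integration.integral_cong) (auto simp: Dk_def inner_diff_left algebra_simps diff_divide_distrib)
    also have "\<dots> = (moment (\<lambda>y. p y * (y \<bullet> h)) x - (x \<bullet> h) * moment p x) / s"
      using integrable_weight_mult[OF p]
        integrable_weight_mult[OF cont_exp_growth_mult[OF p cont_exp_growth_inner[OF cont_exp_growth_ident]]]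
      by (simp add: moment_def)
    finally show ?thesis .
  qed
  ultimately show ?thesis
    by (simp add: moment_def[abs_def])
qed

lemma zprox_inner_eq: "zprox lam \<delta> f x \<bullet> i = moment (\<lambda>y. y \<bullet> i) x / Z x"
proof -
  have "(\<integral>y. weight x y *\<^sub>R y \<partial>lborel) \<bullet> i = moment (\<lambda>y. y \<bullet> i) x"
    using integral_inner_left[OF integrable_weight_scaleR[OF cont_exp_growth_ident], of x i]
    by (simp add: moment_def)
  then show ?thesis
    by (simp add: zprox_def moment_def weight_def gibbs_def)
qed

inductive_set moment_algebra :: "('a \<Rightarrow> real) set" where
  moment: "cont_exp_growth p \<Longrightarrow> moment p \<in> moment_algebra"
| coordinate: "(\<lambda>x. x \<bullet> v) \<in> moment_algebra"
| const: "(\<lambda>x. c) \<in> moment_algebra"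
| inverse: "g \<in> moment_algebra \<Longrightarrow> \<forall>x. g x \<noteq> 0 \<Longrightarrow> (\<lambda>x. 1 / g x) \<in> moment_algebra"
| add: "g \<in> moment_algebra \<Longrightarrow> h \<in> moment_algebra \<Longrightarrow> (\<lambda>x. g x + h x) \<in> moment_algebra"
| mult: "g \<in> moment_algebra \<Longrightarrow> h \<in> moment_algebra \<Longrightarrow> (\<lambda>x. g x * h x) \<in> moment_algebra"

lemma moment_algebra_has_derivative:
  assumes "g \<in> moment_algebra"
  shows "\<exists>D. (\<forall>x. (g has_derivative D x) (at x)) \<and> (\<forall>v. (\<lambda>x. D x v) \<in> moment_algebra)"
  using assms
proof induction
  case (moment p)
  have "(\<lambda>x. (1 / s) * (moment (\<lambda>y. p y * (y \<bullet> v)) x + (- 1) * ((x \<bullet> v) * moment p x)))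
      \<in> moment_algebra" for v
    using moment.hyps
    by (intro moment_algebra.mult moment_algebra.add moment_algebra.const moment_algebra.coordinate
        moment_algebra.moment cont_exp_growth_mult cont_exp_growth_inner cont_exp_growth_ident)
  then have "(\<lambda>x. (moment (\<lambda>y. p y * (y \<bullet> v)) x - (x \<bullet> v) * moment p x) / s) \<in> moment_algebra" for v
    by (simp add: diff_divide_distrib)
  with moment_has_derivative[OF moment.hyps] show ?case
    by (intro exI[of _ "\<lambda>x h. (moment (\<lambda>y. p y * (y \<bullet> h)) x - (x \<bullet> h) * moment p x) / s"]) auto
next
  case (coordinate v)
  have "((\<lambda>x. x \<bullet> v) has_derivative (\<lambda>h. h \<bullet> v)) (at x)" for x
    by (auto intro!: derivative_eq_intros)
  then show ?case
    using moment_algebra.const by (intro exI[of _ "\<lambda>x h. h \<bullet> v"]) auto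
next
  case (const c)
  then show ?case
    using moment_algebra.const by (intro exI[of _ "\<lambda>x h. 0"]) auto
next
  case (inverse g)
  then obtain D where D: "\<And>x. (g has_derivative D x) (at x)" "\<And>v. (\<lambda>x. D x v) \<in> moment_algebra"
    by blast
  have "((\<lambda>x. 1 / g x) has_derivative (\<lambda>v. - 1 * (1 / g x * (1 / g x * D x v)))) (at x)" for x
    using D(1)[of x] inverse.hyps(2)
    by (auto intro!: derivative_eq_intros simp: field_simps power2_eq_square)
  moreover have "(\<lambda>x. - 1 * (1 / g x * (1 / g x * D x v))) \<in> moment_algebra" for v
    using inverse.hyps D(2)
    by (intro moment_algebra.mult moment_algebra.const moment_algebra.inverse)
  ultimately show ?case
    by (intro exI[of _ "\<lambda>x v. - 1 * (1 / g x * (1 / g x * D x v))"]) auto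
next
  case (add g h)
  then obtain Dg Dh where Dg: "\<And>x. (g has_derivative Dg x) (at x)" "\<And>v. (\<lambda>x. Dg x v) \<in> moment_algebra"
    and Dh: "\<And>x. (h has_derivative Dh x) (at x)" "\<And>v. (\<lambda>x. Dh x v) \<in> moment_algebra"
    by blast
  have "((\<lambda>x. g x + h x) has_derivative (\<lambda>v. Dg x v + Dh x v)) (at x)" for x
    by (intro has_derivative_add Dg Dh)
  moreover have "(\<lambda>x. Dg x v + Dh x v) \<in> moment_algebra" for v
    by (intro moment_algebra.add Dg Dh)
  ultimately show ?case
    by (intro exI[of _ "\<lambda>x v. Dg x v + Dh x v"]) auto
next
  case (mult g h)
  then obtain Dg Dh where Dg: "\<And>x. (g has_derivative Dg x) (at x)" "\<And>v. (\<lambda>x. Dg x v) \<in> moment_algebra"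
    and Dh: "\<And>x. (h has_derivative Dh x) (at x)" "\<And>v. (\<lambda>x. Dh x v) \<in> moment_algebra"
    by blast
  have "((\<lambda>x. g x * h x) has_derivative (\<lambda>v. g x * Dh x v + Dg x v * h x)) (at x)" for x
    by (intro has_derivative_mult Dg Dh)
  moreover have "(\<lambda>x. g x * Dh x v + Dg x v * h x) \<in> moment_algebra" for v
    by (intro moment_algebra.add moment_algebra.mult mult.hyps Dg Dh)
  ultimately show ?case
    by (intro exI[of _ "\<lambda>x v. g x * Dh x v + Dg x v * h x"]) auto
qed

lemma zprox_C_infinity: "C_infinity (zprox lam \<delta> f)"
proof (rule C_infinity_if_coordinates_in_derivative_closed[OF moment_algebra_has_derivative])
  fix i :: 'a
  have "\<forall>x. Z x \<noteq> 0"
    using Z_pos by (simp add: less_imp_neq[symmetric])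
  then have "(\<lambda>x. 1 / Z x) \<in> moment_algebra"
    by (intro moment_algebra.inverse moment_algebra.moment cont_exp_growth_const)
  then have "(\<lambda>x. moment (\<lambda>y. y \<bullet> i) x * (1 / Z x)) \<in> moment_algebra"
    by (intro moment_algebra.mult moment_algebra.moment cont_exp_growth_inner cont_exp_growth_ident)
  then show "(\<lambda>x. zprox lam \<delta> f x \<bullet> i) \<in> moment_algebra"
    by (simp add: zprox_inner_eq)
qed

lemma soft_moreau_eq: "soft_moreau lam \<delta> f x = - \<delta> * ln (Z x)"
  by (simp add: soft_moreau_def moment_def weight_def gibbs_def)

text \<open>The potential of \<open>zprox\<close>: by \<open>psi_has_derivative\<close>, \<open>zprox = id - lam \<nabla>f\<^bsup>lam,\<delta>\<^esup>\<close>.\<close>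
definition psi :: "'a \<Rightarrow> real" where
  "psi x = (x \<bullet> x) / 2 - lam * soft_moreau lam \<delta> f x"

lemma psi_eq: "psi x = (x \<bullet> x) / 2 + s * ln (Z x)"
  by (simp add: psi_def soft_moreau_eq)

lemma Z_has_derivative:
  "(Z has_derivative (\<lambda>h. (moment (\<lambda>y. y \<bullet> h) x - (x \<bullet> h) * Z x) / s)) (at x)"
  using moment_has_derivative[OF cont_exp_growth_const, of 1 x] by simp

lemma psi_has_derivative: "(psi has_derivative (\<lambda>h. zprox lam \<delta> f x \<bullet> h)) (at x)"
proof -
  have "((\<lambda>x. (x \<bullet> x) / 2) has_derivative (\<lambda>h. (h \<bullet> x + x \<bullet> h) / 2)) (at x)"
    by (auto intro!: derivative_eq_intros)
  then have "(psi has_derivative (\<lambda>h. (h \<bullet> x + x \<bullet> h) / 2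
      + s * ((moment (\<lambda>y. y \<bullet> h) x - (x \<bullet> h) * Z x) / s * inverse (Z x)))) (at x)"
    unfolding psi_eq[abs_def]
    by (intro has_derivative_add has_derivative_mult_right has_derivative_ln Z_pos Z_has_derivative)
  moreover have "(h \<bullet> x + x \<bullet> h) / 2 + s * ((moment (\<lambda>y. y \<bullet> h) x - (x \<bullet> h) * Z x) / s * inverse (Z x))
      = moment (\<lambda>y. y \<bullet> h) x / Z x" for h
    using Z_pos[of x] lam_pos delta_pos by (simp add: inner_commute field_simps)
  ultimately show ?thesis
    by (simp add: zprox_inner_eq)
qed

lemma moment_variance_pos:
  assumes "u \<noteq> 0"
  shows "(moment (\<lambda>y. y \<bullet> u) x)\<^sup>2 < moment (\<lambda>y. (y \<bullet> u) * (y \<bullet> u)) x * Z x"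
proof -
  define m where "m = moment (\<lambda>y. y \<bullet> u) x / Z x"
  define c where "c = (m / (u \<bullet> u)) *\<^sub>R u"
  have "u \<bullet> u > 0" and "c \<bullet> u = m"
    using assms by (simp_all add: c_def)
  have growth: "cont_exp_growth (\<lambda>y. y \<bullet> u)" "cont_exp_growth (\<lambda>y. (y \<bullet> u) * (y \<bullet> u))"
    "cont_exp_growth (\<lambda>y. ((y - c) \<bullet> u) * ((y - c) \<bullet> u))"
    by (intro cont_exp_growth_mult cont_exp_growth_inner cont_exp_growth_diff
        cont_exp_growth_ident cont_exp_growth_const)+
  have "0 < moment (\<lambda>y. ((y - c) \<bullet> u) * ((y - c) \<bullet> u)) x"
    by (rule moment_pos[OF growth(3), where z = "c + u"]) (use \<open>u \<bullet> u > 0\<close> in auto)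
  also have "moment (\<lambda>y. ((y - c) \<bullet> u) * ((y - c) \<bullet> u)) x
      = moment (\<lambda>y. (y \<bullet> u) * (y \<bullet> u) - (2 * m) * (y \<bullet> u) + m\<^sup>2 * 1) x"
    using \<open>c \<bullet> u = m\<close> by (simp add: inner_diff_left algebra_simps power2_eq_square)
  also have "\<dots> = moment (\<lambda>y. (y \<bullet> u) * (y \<bullet> u)) x - (2 * m) * moment (\<lambda>y. y \<bullet> u) x + m\<^sup>2 * Z x"
    by (rule moment_linear_combination[OF growth(2,1) cont_exp_growth_const])
  also have "\<dots> = moment (\<lambda>y. (y \<bullet> u) * (y \<bullet> u)) x - (moment (\<lambda>y. y \<bullet> u) x)\<^sup>2 / Z x"
    using Z_pos[of x] by (simp add: m_def field_simps power2_eq_square)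
  finally show ?thesis
    using Z_pos[of x] by (simp add: field_simps)
qed

lemma zprox_inner_has_derivative:
  "((\<lambda>x. zprox lam \<delta> f x \<bullet> u) has_derivative
     (\<lambda>h. (moment (\<lambda>y. (y \<bullet> u) * (y \<bullet> h)) x * Z x
            - moment (\<lambda>y. y \<bullet> u) x * moment (\<lambda>y. y \<bullet> h) x) / (s * (Z x)\<^sup>2))) (at x)"
proof -
  define N where "N = moment (\<lambda>y. y \<bullet> u)"
  define DN where "DN h = (moment (\<lambda>y. (y \<bullet> u) * (y \<bullet> h)) x - (x \<bullet> h) * N x) / s" for h
  define DZ where "DZ h = (moment (\<lambda>y. y \<bullet> h) x - (x \<bullet> h) * Z x) / s" for h
  have "(N has_derivative DN) (at x)"
    unfolding N_def DN_def[abs_def]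
    by (intro moment_has_derivative cont_exp_growth_inner cont_exp_growth_ident)
  moreover have "(Z has_derivative DZ) (at x)"
    unfolding DZ_def[abs_def] by (rule Z_has_derivative)
  ultimately have "((\<lambda>x. N x / Z x) has_derivative
      (\<lambda>h. - N x * (inverse (Z x) * DZ h * inverse (Z x)) + DN h / Z x)) (at x)"
    using Z_pos[of x] by (intro has_derivative_divide) auto
  moreover have "- N x * (inverse (Z x) * DZ h * inverse (Z x)) + DN h / Z x
      = (moment (\<lambda>y. (y \<bullet> u) * (y \<bullet> h)) x * Z x - N x * moment (\<lambda>y. y \<bullet> h) x) / (s * (Z x)\<^sup>2)"
    for h
    using Z_pos[of x] lam_pos delta_pos
    by (simp add: DN_def DZ_def field_simps power2_eq_square)
  ultimately show ?thesis
    by (simp add: zprox_inner_eq N_def)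
qed

lemma zprox_strictly_monotone:
  "a \<noteq> b \<Longrightarrow> (zprox lam \<delta> f a - zprox lam \<delta> f b) \<bullet> (a - b) > 0"
proof (rule strictly_monotone_if_directional_derivative_pos[OF zprox_inner_has_derivative])
  fix x u :: 'a
  assume "u \<noteq> 0"
  with moment_variance_pos[of u x] Z_pos[of x] s_pos
  show "0 < (moment (\<lambda>y. (y \<bullet> u) * (y \<bullet> u)) x * Z x - moment (\<lambda>y. y \<bullet> u) x * moment (\<lambda>y. y \<bullet> u) x)
          / (s * (Z x)\<^sup>2)"
    by (simp add: power2_eq_square)
qed

text \<open>On this ball \<open>x \<bullet> y \<ge> x \<bullet> z + norm x / 2\<close>, which is what makes
  \<open>psi x - x \<bullet> z\<close> grow linearly.\<close>
lemma weight_lower_bound_on_ball: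
  fixes x y z :: 'a
  assumes "\<And>y. y \<in> cball z 2 \<Longrightarrow> m \<le> gibbs y" "m \<ge> 0"
    and y: "y \<in> ball (z + (1 / norm x) *\<^sub>R x) (1/2)"
  shows "gauss_density s (0::'a) 0 * m * exp (- (norm z + 3/2)\<^sup>2 / (2 * s))
           * exp ((2 * (x \<bullet> z) + norm x - x \<bullet> x) / (2 * s)) \<le> weight x y"
proof -
  define c where "c = z + (1 / norm x) *\<^sub>R x"
  have "norm (y - c) < 1/2"
    using y by (simp add: c_def dist_norm norm_minus_commute)
  moreover have "norm (c - z) \<le> 1" "x \<bullet> (c - z) = norm x"
    by (cases "x = 0"; simp add: c_def dot_square_norm power2_eq_square)+
  ultimately have "norm (y - z) \<le> 2" "norm y \<le> norm z + 3/2"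
    using norm_triangle_ineq[of "y - c" "c - z"] norm_triangle_ineq[of z "y - z"] by simp_all
  have "2 * (x \<bullet> z) + norm x \<le> 2 * (x \<bullet> y)"
    using Cauchy_Schwarz_ineq2[of x "y - c"] \<open>x \<bullet> (c - z) = norm x\<close>
      mult_left_mono[OF less_imp_le[OF \<open>norm (y - c) < 1/2\<close>], of "norm x"]
    by (simp add: inner_diff_right)
  moreover have "y \<bullet> y \<le> (norm z + 3/2)\<^sup>2"
    using power_mono[OF \<open>norm y \<le> norm z + 3/2\<close> norm_ge_zero, of 2] by (simp add: dot_square_norm)
  ultimately have "- (norm z + 3/2)\<^sup>2 + (2 * (x \<bullet> z) + norm x - x \<bullet> x) \<le> - (norm (y - x))\<^sup>2"
    by (simp add: power2_norm_eq_inner inner_diff_left inner_diff_right inner_commute)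
  then have "(- (norm z + 3/2)\<^sup>2 + (2 * (x \<bullet> z) + norm x - x \<bullet> x)) / (2 * s)
      \<le> - (norm (y - x))\<^sup>2 / (2 * s)"
    by (rule divide_right_mono) (use s_pos in simp)
  then have "- (norm z + 3/2)\<^sup>2 / (2 * s) + (2 * (x \<bullet> z) + norm x - x \<bullet> x) / (2 * s)
      \<le> - (norm (y - x))\<^sup>2 / (2 * s)"
    by (simp only: add_divide_distrib)
  moreover have "m \<le> gibbs y"
    using assms(1) \<open>norm (y - z) \<le> 2\<close> by (simp add: dist_norm norm_minus_commute)
  ultimately have "m * exp (- (norm z + 3/2)\<^sup>2 / (2 * s) + (2 * (x \<bullet> z) + norm x - x \<bullet> x) / (2 * s))
      \<le> gibbs y * exp (- (norm (y - x))\<^sup>2 / (2 * s))"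
    using \<open>m \<ge> 0\<close> by (intro mult_mono) auto
  from mult_left_mono[OF this less_imp_le[OF gauss_density_pos[OF s_pos, of "0::'a" 0]]]
  show ?thesis
    unfolding weight_def gauss_density_eq[of s x y] exp_add by (simp only: mult_ac)
qed

lemma Z_lower_bound:
  fixes z :: 'a
  obtains K where "K > 0" "\<And>x. K * exp ((2 * (x \<bullet> z) + norm x - x \<bullet> x) / (2 * s)) \<le> Z x"
proof -
  have "\<exists>ym\<in>cball z 2. \<forall>y\<in>cball z 2. gibbs ym \<le> gibbs y"
    by (intro continuous_attains_inf compact_cball continuous_on_subset[OF continuous_on_gibbs]) auto
  then obtain ym where ym_min: "\<And>y. y \<in> cball z 2 \<Longrightarrow> gibbs ym \<le> gibbs y"
    by blast
  define L where "L = gauss_density s (0::'a) 0 * gibbs ym * exp (- (norm z + 3/2)\<^sup>2 / (2 * s))"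
  define V where "V = measure lborel (ball (0::'a) (1/2))"
  have "L > 0" "V > 0"
    using gauss_density_pos[OF s_pos, of "0::'a" 0] by (simp_all add: L_def V_def gibbs_def)
  have "V * L * exp ((2 * (x \<bullet> z) + norm x - x \<bullet> x) / (2 * s)) \<le> Z x" for x
  proof -
    define E where "E = exp ((2 * (x \<bullet> z) + norm x - x \<bullet> x) / (2 * s))"
    define B where "B = ball (z + (1 / norm x) *\<^sub>R x) (1/2)"
    have "(\<integral>y. indicator B y * (L * E) \<partial>lborel) \<le> (\<integral>y. weight x y * 1 \<partial>lborel)"
    proof (rule integral_mono)
      have "integrable lborel (indicat_real B)"
        unfolding B_def by (intro integrable_real_indicator emeasure_lborel_ball_finite) simp
      then show "integrable lborel (\<lambda>y. indicator B y * (L * E))"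
        by simp
      show "integrable lborel (\<lambda>y. weight x y * 1)"
        by (rule integrable_weight_mult[OF cont_exp_growth_const])
      show "indicator B y * (L * E) \<le> weight x y * 1" for y
      proof (cases "y \<in> B")
        case True
        with weight_lower_bound_on_ball[OF ym_min _ True[unfolded B_def]] show ?thesis
          by (simp add: L_def E_def gibbs_def)
      qed (use weight_pos[of x y] in simp)
    qed
    moreover have "measure lborel B = V"
      unfolding B_def V_def
      using content_ball_conv_unit_ball[of "1/2" "z + (1 / norm x) *\<^sub>R x"]
        content_ball_conv_unit_ball[of "1/2" "0::'a"]
      by simp
    ultimately show ?thesis
      by (simp add: moment_def E_def mult_ac)
  qed
  with \<open>L > 0\<close> \<open>V > 0\<close> show ?thesis
    using that[of "V * L"] by simp
qed

lemma psi_coercive: "\<exists>c. \<forall>x. c + 1/2 * norm x \<le> psi x - x \<bullet> z"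
proof -
  obtain K where "K > 0" and K: "\<And>x. K * exp ((2 * (x \<bullet> z) + norm x - x \<bullet> x) / (2 * s)) \<le> Z x"
    using Z_lower_bound by blast
  have "s * ln K + 1/2 * norm x \<le> psi x - x \<bullet> z" for x
  proof -
    have "ln K + (2 * (x \<bullet> z) + norm x - x \<bullet> x) / (2 * s) \<le> ln (Z x)"
      using ln_mono[OF K[of x]] \<open>K > 0\<close> by (simp add: ln_mult)
    from mult_left_mono[OF this less_imp_le[OF s_pos]]
    have "s * ln K + s * ((2 * (x \<bullet> z) + norm x - x \<bullet> x) / (2 * s)) \<le> s * ln (Z x)"
      by (simp add: distrib_left)
    moreover have "s * ((2 * (x \<bullet> z) + norm x - x \<bullet> x) / (2 * s)) = x \<bullet> z + norm x / 2 - (x \<bullet> x) / 2"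
      using lam_pos delta_pos by (simp add: field_simps)
    ultimately show ?thesis
      unfolding psi_eq by linarith
  qed
  then show ?thesis
    by blast
qed

lemma zprox_bij: "bij (zprox lam \<delta> f)"
proof (rule bijI)
  show "inj (zprox lam \<delta> f)"
    using zprox_strictly_monotone by (metis diff_self inner_zero_left injI less_irrefl)
  show "surj (zprox lam \<delta> f)"
  proof (rule gradient_surj_if_coercive[OF psi_has_derivative])
    show "\<exists>d>0. \<exists>c. \<forall>x. c + d * norm x \<le> psi x - x \<bullet> z" for z
      using psi_coercive[of z] by (intro exI[of _ "1/2"]) auto
  qed
qed

lemma scaled_H_fun_eq:
  "s * H_fun lam \<delta> f y = inv (zprox lam \<delta> f) y \<bullet> y - psi (inv (zprox lam \<delta> f) y) - (norm y)\<^sup>2 / 2"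
  using lam_pos delta_pos
  by (simp add: H_fun_def psi_def power2_norm_eq_inner inner_diff_left inner_diff_right
      inner_commute field_simps)

lemma prox_set_H_fun: "prox_set (H_fun lam \<delta> f) s x = {zprox lam \<delta> f x}"
proof (rule prox_set_eq_gradient[OF zprox_bij])
  show "psi w + zprox lam \<delta> f w \<bullet> (x - w) < psi x" if "w \<noteq> x" for w x
    using gradient_inequality_if_strictly_monotone[OF psi_has_derivative zprox_strictly_monotone that] .
qed (rule scaled_H_fun_eq)

end

theorem theorem1:
  fixes f :: "'a::euclidean_space \<Rightarrow> real" and lam \<delta> :: real
  assumes "lam > 0" and "\<delta> > 0"
    and A1_cont: "continuous_on UNIV f"
    and A1_min: "\<exists>x0. \<forall>y. f x0 \<le> f y"
    and A2: "integrable lborel (\<lambda>y. exp (- f y / \<delta>))"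
  shows "C_infinity (zprox lam \<delta> f)
    \<and> bij (zprox lam \<delta> f)
    \<and> (\<forall>x. prox_set (H_fun lam \<delta> f) (lam * \<delta>) x = {zprox lam \<delta> f x})
    \<and> (\<forall>xs :: nat \<Rightarrow> 'a. (\<forall>k. xs (Suc k) = zprox lam \<delta> f (xs k)) \<longrightarrow>
          (\<forall>k. prox_set (H_fun lam \<delta> f) (lam * \<delta>) (xs k) = {xs (Suc k)}))"
proof -
  interpret zprox_setting f lam \<delta>
    using assms by unfold_locales
  show ?thesis
    using zprox_C_infinity zprox_bij prox_set_H_fun by simp
qed

end
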